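(* Let $n \ge 2$ be even. Then $|S_{1,1}(n)| - |S_{0,0}(n)|$ equals the number of irreducible polynomials of degree $n/2$ in $\mathbb{F}_2[x]$ whose coefficient of $x^{n/2-1}$ is $1$. Moreover, \[ |S_{1,1}(n)| - |S_{0,0}(n)| = \frac{1}{n}\sum_{\substack{d \mid n/2 \\ d \text{ odd}}} \mu(d)\, 2^{n/(2d)}, \] where $\mu$ is the Möbius function.
   Context: For $n \ge 2$, let $\mathcal{I}_n$ be the set of all irreducible polynomials of degree $n$ in $\mathbb{F}_2[x]$. Every $f \in \mathcal{I}_n$ is monic with constant term $1$; write $f = x^n + f_{n-1}x^{n-1} + \cdots + f_1 x + 1$ with $f_k \in \mathbb{F}_2$. The coefficient $f_{n-1}$ is the trace of $f$ and $f_1$ is its cotrace. For $i,j \in \mathbb{F}_2$, $S_{i,j}(n)$ denotes the set of $f \in \mathcal{I}_n$ with $f_{n-1} = i$ and $f_1 = j$. The trace of a monic irreducible polynomial of degree $m$ is its coefficient of $x^{m-1}$; for $m=1$ the trace-$1$ irreducible is $x+1$. The Möbius function is $\mu(1)=1$, $\mu(m)=(-1)^k$ if $m$ is a product of $k$ distinct primes, and $\mu(m)=0$ otherwise. *)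

theory Defs
  imports "HOL-Computational_Algebra.Computational_Algebra" "HOL-Library.Z2"
begin

definition irred_F2 :: "nat \<Rightarrow> bit poly set" where
  "irred_F2 n = {f. lead_coeff f = 1 \<and> irreducible f \<and> degree f = n}"

text \<open>S i j n: irreducibles of degree n with trace (coeff of x^(n-1)) i and cotrace (coeff of x) j.\<close>
definition S :: "bit \<Rightarrow> bit \<Rightarrow> nat \<Rightarrow> bit poly set" where
  "S i j n = {f \<in> irred_F2 n. coeff f (n - 1) = i \<and> coeff f 1 = j}"

definition mobius :: "nat \<Rightarrow> int" where
  "mobius m = (if squarefree m then (-1) ^ card (prime_factors m) else 0)"

end

theory Submission
  imports Defs "HOL-Computational_Algebra.Field_as_Ring"
begin

text \<open>Let \<open>I\<^sub>d\<close> be the number of irreducibles of degree \<open>d\<close> and \<open>T\<^sub>d\<close> the number of those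
  with trace 1. For a completely multiplicative \<open>\<chi>\<close> on \<open>\<bbbF>\<^sub>2[x]\<close>, unique factorisation gives
  \<open>n A(n) = \<Sum>\<^sub>m \<Lambda>(m) A(n - m)\<close>, where \<open>A(n)\<close> sums \<open>\<chi>\<close> over the monic polynomials of degree
  \<open>n\<close> and \<open>\<Lambda>(m) = \<Sum>\<^sub>d\<^sub>|\<^sub>m d \<Sum>\<^sub>P\<^sub>\<in>\<^sub>I\<^sub>d \<chi>(P)\<^bsup>m/d\<^esup>\<close>; since \<open>A(0) = 1\<close>, the sequence \<open>A\<close> determines \<open>\<Lambda>\<close>.
  For \<open>\<chi> = 1\<close> this is Gauss's formula \<open>\<Sum>\<^sub>d\<^sub>|\<^sub>m d I\<^sub>d = 2\<^sup>m\<close>. For \<open>\<chi>(f) = (-1)\<^bsup>trace f\<^esup>\<close> the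
  sums \<open>A(n)\<close> vanish for \<open>n \<ge> 1\<close> (adding \<open>x\<^bsup>n-1\<^esup>\<close> flips the trace), so \<open>\<Lambda> = 0\<close>, which says
  \<open>\<Sum> d T\<^sub>d = 2\<^bsup>m-1\<^esup>\<close> over the \<open>d | m\<close> with \<open>m/d\<close> odd. M\<ouml>bius inversion over odd divisors
  gives the formula for \<open>T\<^sub>m\<close>; comparing the two identities at \<open>2m\<close> with the one at \<open>m\<close>
  shows that \<open>2 T\<^sub>2\<^sub>m - I\<^sub>2\<^sub>m\<close> satisfies the same relation as \<open>T\<^sub>m\<close>, hence equals it.
  Finally, reflection \<open>f \<mapsto> x\<^sup>n f(1/x)\<close> swaps trace and cotrace of irreducibles of degree
  \<open>n \<ge> 2\<close>, so \<open>|S\<^sub>1\<^sub>0| = |S\<^sub>0\<^sub>1|\<close> and \<open>|S\<^sub>1\<^sub>1| - |S\<^sub>0\<^sub>0| = 2 T\<^sub>n - I\<^sub>n\<close>.\<close>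

text \<open>As in \<^theory>\<open>HOL-Computational_Algebra.Field_as_Ring\<close>, which covers only \<^typ>\<open>rat\<close>,
  \<^typ>\<open>real\<close> and \<^typ>\<open>complex\<close>: these instances make \<^typ>\<open>bit poly\<close> a factorial ring.\<close>

instantiation bit ::
  "{unique_euclidean_ring, normalization_euclidean_semiring, normalization_semidom_multiplicative}"
begin
definition [simp]: "normalize_bit = (normalize_field :: bit \<Rightarrow> _)"
definition [simp]: "unit_factor_bit = (unit_factor_field :: bit \<Rightarrow> _)"
definition [simp]: "euclidean_size_bit = (euclidean_size_field :: bit \<Rightarrow> _)"
definition [simp]: "division_segment (x :: bit) = 1"
instance
  by standard (simp_all add: dvd_field_iff field_split_simps split: if_splits)
end

instantiation bit :: euclidean_ring_gcd
begin
definition gcd_bit :: "bit \<Rightarrow> bit \<Rightarrow> bit" where "gcd_bit = Euclidean_Algorithm.gcd"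
definition lcm_bit :: "bit \<Rightarrow> bit \<Rightarrow> bit" where "lcm_bit = Euclidean_Algorithm.lcm"
definition Gcd_bit :: "bit set \<Rightarrow> bit" where "Gcd_bit = Euclidean_Algorithm.Gcd"
definition Lcm_bit :: "bit set \<Rightarrow> bit" where "Lcm_bit = Euclidean_Algorithm.Lcm"
instance by standard (simp_all add: gcd_bit_def lcm_bit_def Gcd_bit_def Lcm_bit_def)
end

instance bit :: field_gcd ..

section \<open>M\<ouml>bius inversion over odd divisors\<close>

lemma mobius_prime_mult:
  assumes p: "prime (p :: nat)" and s: "s > 0"
  shows "mobius (p * s) = (if p dvd s then 0 else - mobius s)"
proof (cases "p dvd s")
  case True
  then have "p ^ 2 dvd p * s" by (simp add: power2_eq_square)
  then have "\<not> squarefree (p * s)"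
    using p by (metis not_prime_unit squarefreeD)
  with True show ?thesis by (simp add: mobius_def)
next
  case False
  then have "coprime p s" using p by (simp add: prime_imp_coprime)
  then have "squarefree (p * s) \<longleftrightarrow> squarefree s"
    using p squarefree_multD(2)[of p s] squarefree_mult_coprime[of p s] by (auto simp: squarefree_prime)
  moreover have "prime_factors (p * s) = insert p (prime_factors s)"
    using prime_factors_product[of p s] p s by (auto simp: prime_prime_factors)
  moreover have "p \<notin> prime_factors s" using False by auto
  ultimately show ?thesis using False by (simp add: mobius_def)
qed

text \<open>For \<open>j = 0\<close> the index set is infinite, and the sum is \<open>0\<close> by convention.\<close>

lemma sum_mobius_divisors: "(\<Sum>e | e dvd j. mobius e) = (if j = 1 then 1 else 0)"
proof -
  consider "j = 0" | "j = 1" | "j > 1" by linarith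
  then show ?thesis
  proof cases
    case 3
    obtain p where p: "prime p" "p dvd j" using 3 prime_factor_nat[of j] by auto
    define q where "q = j div p"
    have j: "j = p * q" using p by (simp add: q_def)
    have "q > 0" using 3 j by (cases "q = 0") auto
    have fin: "finite {e. e dvd q}" using \<open>q > 0\<close> by (simp add: finite_divisors_nat)
    have coprime_part: "{e. e dvd j \<and> \<not> p dvd e} = {e. e dvd q \<and> \<not> p dvd e}"
    proof (intro Collect_cong iffI conjI)
      fix e assume e: "e dvd j \<and> \<not> p dvd e"
      then have "coprime e p" using p(1) by (metis coprime_commute prime_imp_coprime)
      with e show "e dvd q" by (simp add: j coprime_dvd_mult_right_iff)
    qed (auto simp: j)
    have p_part: "{e. e dvd j \<and> p dvd e} = (\<lambda>e. p * e) ` {e. e dvd q}"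
      using p(1) by (auto simp: j prime_gt_0_nat elim!: dvdE)
    have "(\<Sum>e | e dvd j. mobius e)
        = (\<Sum>e | e dvd j \<and> \<not> p dvd e. mobius e) + (\<Sum>e | e dvd j \<and> p dvd e. mobius e)"
      using 3 by (subst sum.union_disjoint[symmetric]) (auto intro!: sum.cong simp: finite_divisors_nat)
    also have "(\<Sum>e | e dvd j \<and> p dvd e. mobius e) = (\<Sum>e | e dvd q. mobius (p * e))"
      unfolding p_part using p(1) by (subst sum.reindex) (auto simp: inj_on_def prime_gt_0_nat)
    also have "\<dots> = (\<Sum>e | e dvd q. if p dvd e then 0 else - mobius e)"
      using \<open>q > 0\<close> by (intro sum.cong refl) (auto simp: mobius_prime_mult[OF p(1)] intro: Nat.gr0I)
    also have "\<dots> = - (\<Sum>e | e dvd q \<and> \<not> p dvd e. mobius e)"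
      using fin by (simp add: sum.If_cases sum_negf) (intro sum.cong; auto)
    finally show ?thesis using 3 by (simp add: coprime_part)
  qed (simp_all add: mobius_def)
qed

definition odd_cofactor_divisors :: "nat \<Rightarrow> nat set" where
  "odd_cofactor_divisors k = {d. d dvd k \<and> odd (k div d)}"

lemma finite_odd_cofactor_divisors: "k > 0 \<Longrightarrow> finite (odd_cofactor_divisors k)"
  unfolding odd_cofactor_divisors_def by (simp add: finite_divisors_nat)

lemma odd_cofactor_divisors_iff:
  assumes "k > 0"
  shows "d \<in> odd_cofactor_divisors k \<longleftrightarrow> (\<exists>c. k = d * c \<and> odd c)"
  using assms unfolding odd_cofactor_divisors_def by (auto elim!: dvdE)

lemma odd_cofactor_divisors_swap:
  assumes "k > 0"
  shows "(e dvd k \<and> odd e \<and> d \<in> odd_cofactor_divisors (k div e))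
     \<longleftrightarrow> (d \<in> odd_cofactor_divisors k \<and> e dvd k div d)"
proof -
  have "(e dvd k \<and> odd e \<and> d \<in> odd_cofactor_divisors (k div e))
      \<longleftrightarrow> (\<exists>c. k = e * d * c \<and> odd e \<and> odd c)"
    using assms by (auto simp: odd_cofactor_divisors_iff elim!: dvdE)
  also have "\<dots> \<longleftrightarrow> (d \<in> odd_cofactor_divisors k \<and> e dvd k div d)"
    using assms by (auto simp: odd_cofactor_divisors_iff elim!: dvdE)
  finally show ?thesis .
qed

lemma sum_mobius_odd_cofactor_pairs:
  assumes k: "k > 0" and d: "d dvd k"
  shows "(\<Sum>e | e dvd k \<and> odd e \<and> d \<in> odd_cofactor_divisors (k div e). mobius e)
           = (if d = k then 1 else 0)"
proof -
  have "k div d dvd k" using d by (metis dvd_div_mult_self dvd_triv_left)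
  then have "{e. e dvd k \<and> odd e \<and> d \<in> odd_cofactor_divisors (k div e)}
      = (if d \<in> odd_cofactor_divisors k then {e. e dvd k div d} else {})"
    using odd_cofactor_divisors_swap[OF k] by (auto intro: dvd_trans)
  moreover have "k div d = 1 \<longleftrightarrow> d = k" using d k by (auto elim!: dvdE)
  moreover have "k \<in> odd_cofactor_divisors k" using k by (simp add: odd_cofactor_divisors_def)
  ultimately show ?thesis by (auto simp: sum_mobius_divisors)
qed

lemma odd_mobius_inversion:
  fixes f g :: "nat \<Rightarrow> int"
  assumes rel: "\<And>k. k > 0 \<Longrightarrow> (\<Sum>d\<in>odd_cofactor_divisors k. f d) = g k" and k: "k > 0"
  shows "f k = (\<Sum>e | e dvd k \<and> odd e. mobius e * g (k div e))"
proof -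
  define D where "D = {d. d dvd k}"
  define R where "R e d \<longleftrightarrow> e dvd k \<and> odd e \<and> d \<in> odd_cofactor_divisors (k div e)" for e d
  have fin: "finite D" using k by (simp add: D_def finite_divisors_nat)
  have "(\<Sum>e | e dvd k \<and> odd e. mobius e * g (k div e))
      = (\<Sum>e\<in>D. if odd e then mobius e * g (k div e) else 0)"
    using fin by (simp add: sum.inter_filter[symmetric] D_def)
  also have "\<dots> = (\<Sum>e\<in>D. \<Sum>d\<in>{d\<in>D. R e d}. mobius e * f d)"
  proof (rule sum.cong[OF refl])
    fix e assume "e \<in> D"
    then have e: "e dvd k" by (simp add: D_def)
    then have "k div e > 0" using k by (auto elim!: dvdE)
    have "k div e dvd k" using e by (metis dvd_div_mult_self dvd_triv_left)
    then have "{d\<in>D. R e d} = (if odd e then odd_cofactor_divisors (k div e) else {})"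
      using e by (auto simp: R_def D_def odd_cofactor_divisors_def intro: dvd_trans)
    then show "(if odd e then mobius e * g (k div e) else 0) = (\<Sum>d\<in>{d\<in>D. R e d}. mobius e * f d)"
      using rel[OF \<open>k div e > 0\<close>] by (simp add: sum_distrib_left[symmetric])
  qed
  also have "\<dots> = (\<Sum>d\<in>D. \<Sum>e\<in>{e\<in>D. R e d}. mobius e * f d)"
    by (rule sum.swap_restrict[OF fin fin])
  also have "\<dots> = (\<Sum>d\<in>D. if d = k then f k else 0)"
  proof (rule sum.cong[OF refl])
    fix d assume "d \<in> D"
    then have "{e\<in>D. R e d} = {e. e dvd k \<and> odd e \<and> d \<in> odd_cofactor_divisors (k div e)}"
      by (auto simp: R_def D_def)
    then show "(\<Sum>e\<in>{e\<in>D. R e d}. mobius e * f d) = (if d = k then f k else 0)"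
      using sum_mobius_odd_cofactor_pairs[OF k, of d] \<open>d \<in> D\<close>
      by (simp add: D_def sum_distrib_right[symmetric])
  qed
  also have "\<dots> = f k"
    using fin by (simp add: D_def)
  finally show ?thesis ..
qed

lemma odd_cofactor_divisors_double:
  assumes m: "m > 0"
  shows "odd_cofactor_divisors (2 * m) = (\<lambda>e. 2 * e) ` odd_cofactor_divisors m"
proof (intro set_eqI iffI)
  fix d assume "d \<in> odd_cofactor_divisors (2 * m)"
  then obtain c where c: "2 * m = d * c" "odd c"
    using m by (auto simp: odd_cofactor_divisors_iff)
  then have "even d" by (metis dvd_triv_left even_mult_iff)
  then obtain e where "d = 2 * e" by (elim evenE)
  with c m show "d \<in> (\<lambda>e. 2 * e) ` odd_cofactor_divisors m"
    by (auto simp: odd_cofactor_divisors_iff)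
next
  fix d assume "d \<in> (\<lambda>e. 2 * e) ` odd_cofactor_divisors m"
  with m show "d \<in> odd_cofactor_divisors (2 * m)"
    by (auto simp: odd_cofactor_divisors_iff)
qed

lemma divisors_double_split:
  assumes m: "m > 0"
  shows "{d. d dvd 2 * m} = odd_cofactor_divisors (2 * m) \<union> {d. d dvd m}"
    and "odd_cofactor_divisors (2 * m) \<inter> {d. d dvd m} = {}"
proof -
  have "d \<in> odd_cofactor_divisors (2 * m) \<or> d dvd m" if "d dvd 2 * m" for d
  proof -
    from that obtain c where dc: "2 * m = d * c" by (elim dvdE)
    show ?thesis
    proof (cases "odd c")
      case True
      have "2 * m > 0" using m by simp
      with dc True show ?thesis using odd_cofactor_divisors_iff by blast
    next
      case False
      then obtain c' where "c = 2 * c'" by auto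
      with dc have "m = d * c'" by simp
      then show ?thesis by auto
    qed
  qed
  then show "{d. d dvd 2 * m} = odd_cofactor_divisors (2 * m) \<union> {d. d dvd m}"
    by (auto simp: odd_cofactor_divisors_def)
  show "odd_cofactor_divisors (2 * m) \<inter> {d. d dvd m} = {}"
    using m by (auto simp: odd_cofactor_divisors_def elim!: dvdE)
qed

section \<open>Polynomials\<close>

lemma irreducible_degree_pos: "irreducible (p :: 'a :: field poly) \<Longrightarrow> degree p > 0"
  by (metis gr0I irreducible_def is_unit_iff_degree)

lemma coeff_mult_1: "coeff (p * q) 1 = coeff p 0 * coeff q 1 + coeff p 1 * coeff q 0"
  by (simp add: coeff_mult)

lemma coeff_0_irreducible:
  fixes P :: "'a :: field poly"
  assumes "irreducible P" "degree P \<ge> 2"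
  shows "coeff P 0 \<noteq> 0"
proof
  assume "coeff P 0 = 0"
  then obtain q where q: "P = [:0, 1:] * q"
    by (metis dvdE dvd_iff_poly_eq_0 poly_0_coeff_0 minus_zero)
  moreover have "\<not> is_unit [:0 :: 'a, 1:]"
    by (simp add: is_unit_iff_degree)
  ultimately have "is_unit q"
    using irreducibleD[OF assms(1)] by blast
  then have "q \<noteq> 0" by auto
  with \<open>is_unit q\<close> have "degree q = 0"
    by (simp add: is_unit_iff_degree)
  with q \<open>q \<noteq> 0\<close> have "degree P = 1"
    by (simp add: degree_mult_eq)
  with assms(2) show False by simp
qed

lemma irreducible_reflect_poly:
  fixes p :: "'a :: field poly"
  assumes c: "coeff p 0 \<noteq> 0" and irr: "irreducible p"
  shows "irreducible (reflect_poly p)"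
proof (rule irreducibleI)
  have "p \<noteq> 0" using irr by auto
  then show nz: "reflect_poly p \<noteq> 0" by simp
  have "degree (reflect_poly p) > 0"
    using c irreducible_degree_pos[OF irr] by simp
  then show "\<not> is_unit (reflect_poly p)"
    using nz by (simp add: is_unit_iff_degree)
  have unit_iff: "is_unit (reflect_poly x) \<longleftrightarrow> is_unit x" if "coeff x 0 \<noteq> 0" for x :: "'a poly"
  proof -
    have "x \<noteq> 0" using that by auto
    then show ?thesis using that by (simp add: is_unit_iff_degree)
  qed
  fix a b assume ab: "reflect_poly p = a * b"
  have "coeff a 0 * coeff b 0 = lead_coeff p"
    using arg_cong[OF ab, of "\<lambda>x. coeff x 0"] by (simp add: coeff_mult_0)
  then have "coeff a 0 \<noteq> 0" "coeff b 0 \<noteq> 0"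
    using \<open>p \<noteq> 0\<close> by auto
  moreover have "p = reflect_poly a * reflect_poly b"
    using ab c by (metis reflect_poly_mult reflect_poly_reflect_poly)
  then have "is_unit (reflect_poly a) \<or> is_unit (reflect_poly b)"
    using irreducibleD[OF irr] by blast
  ultimately show "is_unit a \<or> is_unit b"
    by (simp add: unit_iff)
qed

lemma lead_coeff_bit_poly: "(p :: bit poly) \<noteq> 0 \<Longrightarrow> lead_coeff p = 1"
  using leading_coeff_neq_0 bit_not_zero_iff by metis

lemma normalize_bit_poly [simp]: "normalize (p :: bit poly) = p"
  by (cases "p = 0") (simp_all add: normalize_poly_def lead_coeff_bit_poly flip: one_pCons)

lemma prime_bit_poly_iff: "prime (p :: bit poly) \<longleftrightarrow> lead_coeff p = 1 \<and> irreducible p"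
  unfolding prime_def prime_elem_iff_irreducible by (auto simp: irreducible_def lead_coeff_bit_poly)

lemma UNIV_bit: "(UNIV :: bit set) = {0, 1}"
  using bit_not_zero_iff by auto

definition monic_polys :: "nat \<Rightarrow> bit poly set" where
  "monic_polys n = {f. lead_coeff f = 1 \<and> degree f = n}"

lemma monic_polys_0: "monic_polys 0 = {1}"
  by (auto simp: monic_polys_def elim: degree_eq_zeroE)

lemma monic_polys_Suc: "monic_polys (Suc n) = (\<lambda>(c, g). pCons c g) ` (UNIV \<times> monic_polys n)"
proof (intro set_eqI iffI)
  fix f assume f: "f \<in> monic_polys (Suc n)"
  obtain c g where "f = pCons c g" by (cases f rule: pCons_cases)
  with f show "f \<in> (\<lambda>(c, g). pCons c g) ` (UNIV \<times> monic_polys n)"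
    by (cases "g = 0") (auto simp: monic_polys_def)
qed (auto simp: monic_polys_def)

lemma finite_monic_polys [simp]: "finite (monic_polys n)"
  and card_monic_polys: "card (monic_polys n) = 2 ^ n"
proof -
  have "finite (monic_polys n) \<and> card (monic_polys n) = 2 ^ n"
  proof (induction n)
    case (Suc n)
    have "inj_on (\<lambda>(c, g). pCons c g) (UNIV \<times> monic_polys n)"
      by (auto simp: inj_on_def)
    moreover have "finite (UNIV :: bit set)" "card (UNIV :: bit set) = 2"
      by (simp_all add: UNIV_bit)
    ultimately show ?case
      using Suc by (simp add: monic_polys_Suc card_image card_cartesian_product)
  qed (simp add: monic_polys_0)
  then show "finite (monic_polys n)" "card (monic_polys n) = 2 ^ n" by simp_all
qed

definition monic_irreducibles_upto :: "nat \<Rightarrow> bit poly set" where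
  "monic_irreducibles_upto n = {P. prime P \<and> degree P \<le> n}"

lemma finite_monic_irreducibles_upto [simp]: "finite (monic_irreducibles_upto n)"
proof (rule finite_subset)
  show "monic_irreducibles_upto n \<subseteq> (\<Union>d\<le>n. monic_polys d)"
    by (auto simp: monic_irreducibles_upto_def monic_polys_def prime_bit_poly_iff)
qed simp

lemma irred_F2_eq_primes: "irred_F2 d = {P. prime P \<and> degree P = d}"
  by (auto simp: irred_F2_def prime_bit_poly_iff)

lemma finite_irred_F2 [simp]: "finite (irred_F2 d)"
  by (rule finite_subset[OF _ finite_monic_irreducibles_upto[of d]])
    (auto simp: irred_F2_eq_primes monic_irreducibles_upto_def)

lemma degree_eq_sum_prime_power_divisors:
  fixes f :: "bit poly"
  assumes f: "f \<noteq> 0" and n: "degree f = n"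
  shows "n = (\<Sum>P\<in>monic_irreducibles_upto n. \<Sum>k\<in>{1..n}. if P ^ k dvd f then degree P else 0)"
proof -
  have "n = degree (\<Prod>P\<in>prime_factors f. P ^ multiplicity P f)"
    using prod_prime_factors[OF f] by (simp add: n)
  also have "\<dots> = (\<Sum>P\<in>prime_factors f. multiplicity P f * degree P)"
    by (subst degree_prod_sum_eq)
      (auto intro!: sum.cong simp: degree_power_eq dest: in_prime_factors_imp_prime)
  also have "\<dots> = (\<Sum>P\<in>monic_irreducibles_upto n. multiplicity P f * degree P)"
  proof (rule sum.mono_neutral_left)
    show "prime_factors f \<subseteq> monic_irreducibles_upto n"
      using f by (auto simp: monic_irreducibles_upto_def dvd_imp_degree_le simp flip: n)
    show "\<forall>P\<in>monic_irreducibles_upto n - prime_factors f. multiplicity P f * degree P = 0"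
      using f by (auto simp: monic_irreducibles_upto_def in_prime_factors_iff intro!: not_dvd_imp_multiplicity_0)
  qed simp_all
  also have "\<dots> = (\<Sum>P\<in>monic_irreducibles_upto n. \<Sum>k\<in>{1..n}. if P ^ k dvd f then degree P else 0)"
  proof (rule sum.cong[OF refl])
    fix P assume "P \<in> monic_irreducibles_upto n"
    then have P: "prime P" by (simp add: monic_irreducibles_upto_def)
    then have "degree P > 0"
      using irreducible_degree_pos prime_bit_poly_iff by blast
    then have "multiplicity P f \<le> multiplicity P f * degree P"
      by simp
    also have "\<dots> = degree (P ^ multiplicity P f)"
      using P by (simp add: degree_power_eq)
    also have "\<dots> \<le> n"
      using f multiplicity_dvd by (auto simp flip: n intro: dvd_imp_degree_le)
    finally have "{k\<in>{1..n}. P ^ k dvd f} = {1..multiplicity P f}"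
      using power_dvd_iff_le_multiplicity[OF f] P not_prime_unit by auto
    then show "multiplicity P f * degree P = (\<Sum>k\<in>{1..n}. if P ^ k dvd f then degree P else 0)"
      by (simp add: sum.inter_filter[symmetric])
  qed
  finally show ?thesis .
qed

lemma monic_polys_multiples:
  assumes P: "lead_coeff P = 1"
  shows "{f \<in> monic_polys n. P dvd f}
           = (if degree P \<le> n then (\<lambda>g. P * g) ` monic_polys (n - degree P) else {})"
proof -
  have P0: "P \<noteq> 0" using P by auto
  have *: "f \<in> (\<lambda>g. P * g) ` monic_polys (n - degree P) \<and> degree P \<le> n"
    if f: "f \<in> monic_polys n" "P dvd f" for f
  proof -
    from f obtain g where fg: "f = P * g" by (elim dvdE)
    with f have g0: "g \<noteq> 0" by (auto simp: monic_polys_def)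
    then have "degree f = degree P + degree g"
      using fg P0 by (simp add: degree_mult_eq)
    with f fg g0 show ?thesis
      by (auto simp: monic_polys_def intro!: lead_coeff_bit_poly)
  qed
  have "P * g \<in> monic_polys n" if "g \<in> monic_polys (n - degree P)" "degree P \<le> n" for g
  proof -
    have "g \<noteq> 0" using that by (auto simp: monic_polys_def)
    then have "P * g \<noteq> 0" "degree (P * g) = n"
      using that P0 by (auto simp: monic_polys_def degree_mult_eq)
    then show ?thesis
      unfolding monic_polys_def using lead_coeff_bit_poly by blast
  qed
  with * show ?thesis by auto
qed

section \<open>Character sums over monic polynomials\<close>

definition char_sum :: "(bit poly \<Rightarrow> int) \<Rightarrow> nat \<Rightarrow> int" where
  "char_sum \<chi> n = (\<Sum>f\<in>monic_polys n. \<chi> f)"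

text \<open>The sum of \<open>\<Lambda>(f) \<chi>(f)\<close> over the monic \<open>f\<close> of degree \<open>m\<close>, where \<open>\<Lambda>(P\<^sup>k) = degree P\<close>
  for monic irreducible \<open>P\<close> and \<open>\<Lambda> = 0\<close> on all other polynomials.\<close>

definition mangoldt_sum :: "(bit poly \<Rightarrow> int) \<Rightarrow> nat \<Rightarrow> int" where
  "mangoldt_sum \<chi> m = (\<Sum>d | d dvd m. \<Sum>P\<in>irred_F2 d. int d * \<chi> P ^ (m div d))"

lemma mangoldt_sum_eq_prime_powers:
  assumes m: "1 \<le> m" "m \<le> n"
  shows "(\<Sum>P\<in>monic_irreducibles_upto n. \<Sum>k\<in>{1..n}.
            if k * degree P = m then int (degree P) * \<chi> P ^ k else 0) = mangoldt_sum \<chi> m"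
proof -
  let ?h = "\<lambda>P. int (degree P) * \<chi> P ^ (m div degree P)"
  have "(\<Sum>P\<in>monic_irreducibles_upto n. \<Sum>k\<in>{1..n}.
            if k * degree P = m then int (degree P) * \<chi> P ^ k else 0)
      = (\<Sum>P\<in>monic_irreducibles_upto n. if degree P dvd m then ?h P else 0)"
  proof (rule sum.cong[OF refl])
    fix P assume "P \<in> monic_irreducibles_upto n"
    then have "degree P > 0"
      using irreducible_degree_pos prime_bit_poly_iff by (auto simp: monic_irreducibles_upto_def)
    moreover have "m div degree P \<in> {1..n}" if "degree P dvd m"
      using that m \<open>degree P > 0\<close> by (auto elim!: dvdE intro: le_trans[OF div_le_dividend])
    ultimately show "(\<Sum>k\<in>{1..n}. if k * degree P = m then int (degree P) * \<chi> P ^ k else 0)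
        = (if degree P dvd m then ?h P else 0)"
      by (auto simp: sum.delta' elim!: dvdE intro!: sum.neutral)
  qed
  also have "\<dots> = (\<Sum>P\<in>{P \<in> monic_irreducibles_upto n. degree P dvd m}. ?h P)"
    by (simp add: sum.inter_filter)
  also have "\<dots> = (\<Sum>d | d dvd m. \<Sum>P\<in>{P \<in> monic_irreducibles_upto n. degree P dvd m \<and> degree P = d}. ?h P)"
    using m by (subst sum.group[symmetric, of _ "{d. d dvd m}" degree]) (auto simp: finite_divisors_nat)
  also have "\<dots> = mangoldt_sum \<chi> m"
    unfolding mangoldt_sum_def
  proof (rule sum.cong[OF refl])
    fix d assume "d \<in> {d. d dvd m}"
    then have "d \<le> n" using m by (auto dest!: dvd_imp_le)
    then have "{P \<in> monic_irreducibles_upto n. degree P dvd m \<and> degree P = d} = irred_F2 d"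
      using \<open>d \<in> {d. d dvd m}\<close> by (auto simp: monic_irreducibles_upto_def irred_F2_eq_primes)
    then show "(\<Sum>P\<in>{P \<in> monic_irreducibles_upto n. degree P dvd m \<and> degree P = d}. ?h P)
        = (\<Sum>P\<in>irred_F2 d. int d * \<chi> P ^ (m div d))"
      by (auto simp: irred_F2_eq_primes intro!: sum.cong)
  qed
  finally show ?thesis .
qed

locale completely_multiplicative =
  fixes \<chi> :: "bit poly \<Rightarrow> int"
  assumes mult: "\<chi> (f * g) = \<chi> f * \<chi> g"
    and one: "\<chi> 1 = 1"
begin

lemma power: "\<chi> (f ^ k) = \<chi> f ^ k"
  by (induction k) (simp_all add: one mult)

lemma sum_monic_multiples:
  assumes "lead_coeff P = 1"
  shows "(\<Sum>f\<in>{f \<in> monic_polys n. P dvd f}. \<chi> f)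
           = (if degree P \<le> n then \<chi> P * char_sum \<chi> (n - degree P) else 0)"
proof -
  have "inj_on (\<lambda>g. P * g) (monic_polys (n - degree P))"
    using assms by (auto simp: inj_on_def)
  then show ?thesis
    by (simp add: monic_polys_multiples[OF assms] sum.reindex mult char_sum_def sum_distrib_left)
qed

lemma degree_times_char_sum:
  "int n * char_sum \<chi> n = (\<Sum>P\<in>monic_irreducibles_upto n. \<Sum>k\<in>{1..n}.
     if k * degree P \<le> n then int (degree P) * \<chi> P ^ k * char_sum \<chi> (n - k * degree P) else 0)"
proof -
  let ?Q = "monic_irreducibles_upto n"
  have "int n * char_sum \<chi> n
      = (\<Sum>f\<in>monic_polys n. \<Sum>P\<in>?Q. \<Sum>k\<in>{1..n}. if P ^ k dvd f then int (degree P) * \<chi> f else 0)"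
    unfolding char_sum_def sum_distrib_left
  proof (rule sum.cong[OF refl])
    fix f assume "f \<in> monic_polys n"
    then have "f \<noteq> 0" "degree f = n" by (auto simp: monic_polys_def)
    then have "int n = int (\<Sum>P\<in>?Q. \<Sum>k\<in>{1..n}. if P ^ k dvd f then degree P else 0)"
      by (intro arg_cong[of _ _ int] degree_eq_sum_prime_power_divisors)
    then show "int n * \<chi> f = (\<Sum>P\<in>?Q. \<Sum>k\<in>{1..n}. if P ^ k dvd f then int (degree P) * \<chi> f else 0)"
      by (auto simp: of_nat_sum sum_distrib_right intro!: sum.cong)
  qed
  also have "\<dots> = (\<Sum>P\<in>?Q. \<Sum>k\<in>{1..n}. int (degree P) * (\<Sum>f\<in>{f \<in> monic_polys n. P ^ k dvd f}. \<chi> f))"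
    by (subst sum.swap, rule sum.cong[OF refl], subst sum.swap)
      (auto simp: sum.inter_filter sum_distrib_left intro!: sum.cong)
  also have "\<dots> = (\<Sum>P\<in>?Q. \<Sum>k\<in>{1..n}.
     if k * degree P \<le> n then int (degree P) * \<chi> P ^ k * char_sum \<chi> (n - k * degree P) else 0)"
  proof (intro sum.cong refl)
    fix P k assume "P \<in> ?Q"
    then have "lead_coeff P = 1"
      by (simp add: monic_irreducibles_upto_def prime_bit_poly_iff)
    then have "degree (P ^ k) = k * degree P" "lead_coeff (P ^ k) = 1"
      by (auto intro!: degree_power_eq simp: lead_coeff_power)
    then show "int (degree P) * (\<Sum>f\<in>{f \<in> monic_polys n. P ^ k dvd f}. \<chi> f)
        = (if k * degree P \<le> n then int (degree P) * \<chi> P ^ k * char_sum \<chi> (n - k * degree P) else 0)"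
      by (simp add: sum_monic_multiples power)
  qed
  finally show ?thesis .
qed

text \<open>Coefficients of the logarithmic derivative of the Euler product of \<open>\<Sum>\<^sub>f \<chi>(f) t\<^bsup>degree f\<^esup>\<close>.\<close>

theorem char_sum_convolution:
  "int n * char_sum \<chi> n = (\<Sum>m\<in>{1..n}. mangoldt_sum \<chi> m * char_sum \<chi> (n - m))"
proof -
  let ?Q = "monic_irreducibles_upto n"
  have "int n * char_sum \<chi> n = (\<Sum>P\<in>?Q. \<Sum>k\<in>{1..n}. \<Sum>m\<in>{1..n}.
      if k * degree P = m then int (degree P) * \<chi> P ^ k * char_sum \<chi> (n - m) else 0)"
    unfolding degree_times_char_sum
  proof (intro sum.cong refl)
    fix P k assume "P \<in> ?Q" "k \<in> {1..n}"
    then have "degree P > 0"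
      using irreducible_degree_pos prime_bit_poly_iff by (auto simp: monic_irreducibles_upto_def)
    with \<open>k \<in> {1..n}\<close> have "1 \<le> k * degree P"
      by simp
    then show "(if k * degree P \<le> n then int (degree P) * \<chi> P ^ k * char_sum \<chi> (n - k * degree P) else 0)
        = (\<Sum>m\<in>{1..n}. if k * degree P = m then int (degree P) * \<chi> P ^ k * char_sum \<chi> (n - m) else 0)"
      by (simp add: sum.delta)
  qed
  also have "\<dots> = (\<Sum>P\<in>?Q. \<Sum>m\<in>{1..n}. \<Sum>k\<in>{1..n}.
      if k * degree P = m then int (degree P) * \<chi> P ^ k * char_sum \<chi> (n - m) else 0)"
    by (rule sum.cong[OF refl], rule sum.swap)
  also have "\<dots> = (\<Sum>m\<in>{1..n}. \<Sum>P\<in>?Q. \<Sum>k\<in>{1..n}.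
      if k * degree P = m then int (degree P) * \<chi> P ^ k * char_sum \<chi> (n - m) else 0)"
    by (rule sum.swap)
  also have "\<dots> = (\<Sum>m\<in>{1..n}. mangoldt_sum \<chi> m * char_sum \<chi> (n - m))"
    by (intro sum.cong refl)
      (auto simp: mangoldt_sum_eq_prime_powers[symmetric] sum_distrib_right intro!: sum.cong)
  finally show ?thesis .
qed

end

lemma convolution_unique:
  fixes a b c :: "nat \<Rightarrow> int"
  assumes a0: "a 0 = 1"
    and eq: "\<And>n. (\<Sum>m\<in>{1..n}. b m * a (n - m)) = (\<Sum>m\<in>{1..n}. c m * a (n - m))"
    and "m \<ge> 1"
  shows "b m = c m"
  using \<open>m \<ge> 1\<close>
proof (induction m rule: less_induct)
  case (less m)
  have split: "(\<Sum>k\<in>{1..m}. h k * a (m - k)) = (\<Sum>k\<in>{1..<m}. h k * a (m - k)) + h m"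
    for h :: "nat \<Rightarrow> int"
    using less.prems a0 by (simp add: atLeastLessThanSuc_atLeastAtMost[symmetric] Suc_le_D add.commute)
  have "(\<Sum>k\<in>{1..<m}. b k * a (m - k)) = (\<Sum>k\<in>{1..<m}. c k * a (m - k))"
    using less.IH by simp
  moreover have "(\<Sum>k\<in>{1..<m}. b k * a (m - k)) + b m = (\<Sum>k\<in>{1..<m}. c k * a (m - k)) + c m"
    using eq[of m] unfolding split .
  ultimately show ?case by simp
qed

definition irred_count :: "nat \<Rightarrow> int" where
  "irred_count d = int (card (irred_F2 d))"

interpretation const_one: completely_multiplicative "\<lambda>_. 1"
  by standard simp_all

lemma char_sum_one: "char_sum (\<lambda>_. 1) n = 2 ^ n"
  by (simp add: char_sum_def card_monic_polys)

lemma sum_divisors_irred_count: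
  assumes "m \<ge> 1"
  shows "(\<Sum>d | d dvd m. int d * irred_count d) = 2 ^ m"
proof -
  have "mangoldt_sum (\<lambda>_. 1) m = 2 ^ m"
  proof (rule convolution_unique[of "char_sum (\<lambda>_. 1)"])
    show "(\<Sum>k\<in>{1..n}. mangoldt_sum (\<lambda>_. 1) k * char_sum (\<lambda>_. 1) (n - k))
        = (\<Sum>k\<in>{1..n}. 2 ^ k * char_sum (\<lambda>_. 1) (n - k))" for n
    proof -
      have "(\<Sum>k\<in>{1..n}. (2 :: int) ^ k * 2 ^ (n - k)) = int n * 2 ^ n"
        by (simp add: power_add[symmetric])
      then show ?thesis
        using const_one.char_sum_convolution[of n] by (simp add: char_sum_one)
    qed
  qed (use assms in \<open>simp_all add: char_sum_one\<close>)
  then show ?thesis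
    by (simp add: mangoldt_sum_def irred_count_def mult.commute)
qed

section \<open>Irreducibles of trace one\<close>

definition cotrace_sign :: "bit poly \<Rightarrow> int" where
  "cotrace_sign p = (if coeff p 0 = 0 then 0 else if coeff p 1 = 0 then 1 else -1)"

lemma cotrace_sign_mult: "cotrace_sign (p * q) = cotrace_sign p * cotrace_sign q"
proof -
  have bit_cases: "x = 0 \<or> x = 1" for x :: bit
    using bit_not_zero_iff by blast
  show ?thesis
    unfolding cotrace_sign_def coeff_mult_0 coeff_mult_1
    using bit_cases[of "coeff p 0"] bit_cases[of "coeff q 0"] bit_cases[of "coeff p 1"] bit_cases[of "coeff q 1"]
    by auto
qed

text \<open>Reflection exchanges trace and cotrace, and the cotrace is additive under
  multiplication of polynomials with constant term 1.\<close>

definition trace_sign :: "bit poly \<Rightarrow> int" where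
  "trace_sign p = cotrace_sign (reflect_poly p)"

interpretation trace_sign: completely_multiplicative trace_sign
  by standard (simp_all add: trace_sign_def reflect_poly_mult cotrace_sign_mult, simp add: cotrace_sign_def)

lemma trace_sign_monic:
  assumes "f \<in> monic_polys n" "n \<ge> 1"
  shows "trace_sign f = (if coeff f (n - 1) = 1 then -1 else 1)"
  using assms by (auto simp: trace_sign_def cotrace_sign_def coeff_reflect_poly monic_polys_def)

lemma char_sum_trace_sign:
  assumes n: "n \<ge> 1"
  shows "char_sum trace_sign n = 0"
proof -
  define s where "s f = f + monom 1 (n - 1)" for f :: "bit poly"
  have s_monic: "s f \<in> monic_polys n" if "f \<in> monic_polys n" for f
    using that n by (auto simp: s_def monic_polys_def degree_add_eq_left degree_monom_eq)
  have "s (s f) = f" for f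
    by (simp add: s_def add.assoc add_monom)
  moreover have "trace_sign (s f) = - trace_sign f" if "f \<in> monic_polys n" for f
    using that n s_monic[OF that] by (auto simp: trace_sign_monic s_def)
  ultimately have "char_sum trace_sign n = (\<Sum>f\<in>monic_polys n. - trace_sign f)"
    unfolding char_sum_def by (intro sum.reindex_bij_witness[of _ s s]) (auto simp: s_monic)
  then show ?thesis
    by (simp add: char_sum_def sum_negf)
qed

lemma mangoldt_sum_trace_sign:
  assumes m: "m \<ge> 1"
  shows "mangoldt_sum trace_sign m = 0"
proof -
  have "char_sum trace_sign 0 = 1"
    by (simp add: char_sum_def monic_polys_0 trace_sign.one)
  then have "(\<Sum>k\<in>{1..m}. mangoldt_sum trace_sign k * char_sum trace_sign (m - k))
      = (\<Sum>k\<in>{1..m}. if k = m then mangoldt_sum trace_sign k else 0)"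
    by (intro sum.cong refl) (auto simp: char_sum_trace_sign)
  with trace_sign.char_sum_convolution[of m] m show ?thesis
    by (simp add: char_sum_trace_sign)
qed

definition trace_one_count :: "nat \<Rightarrow> int" where
  "trace_one_count d = int (card {f \<in> irred_F2 d. coeff f (d - 1) = 1})"

lemma sum_trace_sign_power:
  assumes "d \<ge> 1"
  shows "(\<Sum>P\<in>irred_F2 d. trace_sign P ^ k)
           = irred_count d - (if odd k then 2 * trace_one_count d else 0)"
proof -
  have "(\<Sum>P\<in>irred_F2 d. trace_sign P ^ k)
      = (\<Sum>P\<in>irred_F2 d. 1 - (if odd k \<and> coeff P (d - 1) = 1 then 2 else 0))"
    using assms by (intro sum.cong refl)
      (auto simp: trace_sign_monic irred_F2_def monic_polys_def)
  also have "\<dots> = irred_count d - (if odd k then 2 * trace_one_count d else 0)"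
    by (simp add: sum_subtractf sum.inter_filter[symmetric] irred_count_def trace_one_count_def)
  finally show ?thesis .
qed

lemma sum_odd_cofactor_trace_one_count:
  assumes m: "m \<ge> 1"
  shows "(\<Sum>d\<in>odd_cofactor_divisors m. int d * trace_one_count d) = 2 ^ (m - 1)"
proof -
  have "0 = mangoldt_sum trace_sign m"
    using mangoldt_sum_trace_sign[OF m] ..
  also have "\<dots> = (\<Sum>d | d dvd m. int d * irred_count d
                     - 2 * (if odd (m div d) then int d * trace_one_count d else 0))"
    unfolding mangoldt_sum_def
  proof (intro sum.cong refl)
    fix d assume "d \<in> {d. d dvd m}"
    then have "d \<ge> 1" using m by (auto intro: Nat.gr0I)
    then show "(\<Sum>P\<in>irred_F2 d. int d * trace_sign P ^ (m div d))
        = int d * irred_count d - 2 * (if odd (m div d) then int d * trace_one_count d else 0)"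
      by (simp add: sum_distrib_left[symmetric] sum_trace_sign_power algebra_simps)
  qed
  also have "\<dots> = 2 ^ m - 2 * (\<Sum>d\<in>odd_cofactor_divisors m. int d * trace_one_count d)"
  proof -
    have "(\<Sum>d | d dvd m. if odd (m div d) then int d * trace_one_count d else 0)
        = (\<Sum>d\<in>odd_cofactor_divisors m. int d * trace_one_count d)"
      using m by (simp add: sum.inter_filter[symmetric] finite_divisors_nat odd_cofactor_divisors_def)
    then show ?thesis
      using sum_divisors_irred_count[OF m] by (simp add: sum_subtractf sum_distrib_left[symmetric])
  qed
  finally show ?thesis
    using m by (cases m) simp_all
qed

lemma sum_odd_cofactor_double_counts:
  assumes k: "k \<ge> 1"
  shows "(\<Sum>e\<in>odd_cofactor_divisors k. int e * (2 * trace_one_count (2 * e) - irred_count (2 * e)))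
           = 2 ^ (k - 1)"
proof -
  let ?E = "odd_cofactor_divisors"
  have reindex: "(\<Sum>e\<in>?E k. int (2 * e) * h (2 * e)) = (\<Sum>d\<in>?E (2 * k). int d * h d)" for h
    using k by (simp add: odd_cofactor_divisors_double sum.reindex inj_on_def)
  have T: "(\<Sum>e\<in>?E k. int (2 * e) * trace_one_count (2 * e)) = 2 ^ (2 * k - 1)"
    using reindex sum_odd_cofactor_trace_one_count[of "2 * k"] k by simp
  have "(\<Sum>d | d dvd 2 * k. int d * irred_count d)
      = (\<Sum>d\<in>?E (2 * k). int d * irred_count d) + (\<Sum>d | d dvd k. int d * irred_count d)"
    using k divisors_double_split[of k]
    by (simp add: sum.union_disjoint finite_odd_cofactor_divisors finite_divisors_nat)
  then have I: "(\<Sum>e\<in>?E k. int (2 * e) * irred_count (2 * e)) = 2 ^ (2 * k) - 2 ^ k"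
    using reindex k by (simp add: sum_divisors_irred_count)
  have "2 * (\<Sum>e\<in>?E k. int e * (2 * trace_one_count (2 * e) - irred_count (2 * e)))
      = 2 * (\<Sum>e\<in>?E k. int (2 * e) * trace_one_count (2 * e))
        - (\<Sum>e\<in>?E k. int (2 * e) * irred_count (2 * e))"
    by (simp add: sum_distrib_left sum_subtractf algebra_simps)
  also have "\<dots> = 2 * 2 ^ (2 * k - 1) - (2 ^ (2 * k) - 2 ^ k)"
    by (simp only: T I)
  also have "\<dots> = 2 * 2 ^ (k - 1)"
    using k by (cases k) simp_all
  finally show ?thesis by simp
qed

lemma trace_one_count_double:
  assumes m: "m \<ge> 1"
  shows "2 * trace_one_count (2 * m) - irred_count (2 * m) = trace_one_count m"
proof -
  let ?g = "\<lambda>k. (2 :: int) ^ (k - 1)"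
  have "int m * (2 * trace_one_count (2 * m) - irred_count (2 * m))
      = (\<Sum>e | e dvd m \<and> odd e. mobius e * ?g (m div e))"
    by (rule odd_mobius_inversion) (use sum_odd_cofactor_double_counts m in auto)
  moreover have "int m * trace_one_count m = (\<Sum>e | e dvd m \<and> odd e. mobius e * ?g (m div e))"
    by (rule odd_mobius_inversion) (use sum_odd_cofactor_trace_one_count m in auto)
  ultimately have "int m * (2 * trace_one_count (2 * m) - irred_count (2 * m)) = int m * trace_one_count m"
    by simp
  then show ?thesis
    using m by simp
qed

lemma trace_one_count_formula:
  assumes m: "m \<ge> 1"
  shows "2 * int m * trace_one_count m = (\<Sum>e | e dvd m \<and> odd e. mobius e * 2 ^ (m div e))"
proof -
  have "int m * trace_one_count m = (\<Sum>e | e dvd m \<and> odd e. mobius e * 2 ^ (m div e - 1))"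
    by (rule odd_mobius_inversion) (use sum_odd_cofactor_trace_one_count m in auto)
  then have "2 * int m * trace_one_count m
      = 2 * (\<Sum>e | e dvd m \<and> odd e. mobius e * 2 ^ (m div e - 1))"
    by simp
  also have "\<dots> = (\<Sum>e | e dvd m \<and> odd e. 2 * (mobius e * 2 ^ (m div e - 1)))"
    by (rule sum_distrib_left)
  also have "\<dots> = (\<Sum>e | e dvd m \<and> odd e. mobius e * 2 ^ (m div e))"
  proof (intro sum.cong refl)
    fix e assume "e \<in> {e. e dvd m \<and> odd e}"
    then have "m div e \<noteq> 0" using m by (auto elim!: dvdE)
    then show "2 * (mobius e * 2 ^ (m div e - 1)) = mobius e * 2 ^ (m div e)"
      by (cases "m div e") simp_all
  qed
  finally show ?thesis .
qed

section \<open>The reflection symmetry\<close>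

lemma reflect_poly_S:
  assumes P: "P \<in> S i j n" and n: "n \<ge> 2"
  shows "reflect_poly P \<in> S j i n"
proof -
  have irr: "irreducible P" and deg: "degree P = n"
    using P by (auto simp: S_def irred_F2_def)
  then have c0: "coeff P 0 = 1"
    using coeff_0_irreducible[of P] n by simp
  have "irreducible (reflect_poly P)"
    using irreducible_reflect_poly[OF _ irr] c0 by simp
  with P c0 deg n show ?thesis
    by (auto simp: S_def irred_F2_def coeff_reflect_poly)
qed

lemma card_S_swap:
  assumes n: "n \<ge> 2"
  shows "card (S i j n) = card (S j i n)"
proof -
  have c0: "coeff P 0 \<noteq> 0" if "P \<in> S k l n" for P k l
    by (rule coeff_0_irreducible) (use that n in \<open>auto simp: S_def irred_F2_def\<close>)
  have "inj_on reflect_poly (S i j n)"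
    by (rule inj_onI) (metis c0 reflect_poly_reflect_poly)
  moreover have "reflect_poly ` S i j n = S j i n"
  proof
    show "reflect_poly ` S i j n \<subseteq> S j i n"
      using reflect_poly_S n by auto
    show "S j i n \<subseteq> reflect_poly ` S i j n"
    proof
      fix Q assume "Q \<in> S j i n"
      then show "Q \<in> reflect_poly ` S i j n"
        using reflect_poly_S[OF _ n] c0 by (metis image_eqI reflect_poly_reflect_poly)
    qed
  qed
  ultimately show ?thesis
    by (metis card_image)
qed

lemma card_split_bit:
  fixes g :: "'a \<Rightarrow> bit"
  assumes "finite X"
  shows "card X = card {x \<in> X. g x = 1} + card {x \<in> X. g x = 0}"
  using assms by (subst card_Un_disjoint[symmetric]) (auto intro!: arg_cong[where f = card])

lemma card_S11_minus_S00:
  assumes n: "n \<ge> 2"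
  shows "int (card (S 1 1 n)) - int (card (S 0 0 n)) = 2 * trace_one_count n - irred_count n"
proof -
  have trace_split: "card {f \<in> irred_F2 n. coeff f (n - 1) = i} = card (S i 1 n) + card (S i 0 n)" for i
  proof -
    have S_eq: "{f \<in> {f \<in> irred_F2 n. coeff f (n - 1) = i}. coeff f 1 = j} = S i j n" for j
      by (auto simp: S_def)
    have "finite {f \<in> irred_F2 n. coeff f (n - 1) = i}"
      by simp
    from card_split_bit[OF this, of "\<lambda>f. coeff f 1"] show ?thesis
      unfolding S_eq .
  qed
  have "card (irred_F2 n) = card (S 1 1 n) + card (S 1 0 n) + card (S 0 1 n) + card (S 0 0 n)"
    using card_split_bit[of "irred_F2 n" "\<lambda>f. coeff f (n - 1)"] trace_split by simp
  then show ?thesis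
    using trace_split[of 1] card_S_swap[OF n, of 1 0]
    by (simp add: irred_count_def trace_one_count_def)
qed

theorem theorem2:
  fixes n :: nat
  assumes "n \<ge> 2" and "even n"
  shows "int (card (S 1 1 n)) - int (card (S 0 0 n))
           = int (card {f \<in> irred_F2 (n div 2). coeff f (n div 2 - 1) = 1})
         \<and> real (card (S 1 1 n)) - real (card (S 0 0 n))
           = (1 / real n) * (\<Sum>d \<in> {d. d dvd n div 2 \<and> odd d}. real_of_int (mobius d) * 2 ^ (n div (2 * d)))"
proof -
  obtain m where n: "n = 2 * m" using \<open>even n\<close> by (elim evenE)
  with \<open>n \<ge> 2\<close> have m: "m \<ge> 1" by simp
  have diff: "int (card (S 1 1 n)) - int (card (S 0 0 n)) = trace_one_count m"
    using card_S11_minus_S00[OF \<open>n \<ge> 2\<close>] trace_one_count_double[OF m] n by simp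
  have "real (card (S 1 1 n)) - real (card (S 0 0 n)) = (1 / real n) * (2 * real m * trace_one_count m)"
    using arg_cong[OF diff, of real_of_int] n m by simp
  also have "\<dots> = (1 / real n) * (\<Sum>d | d dvd m \<and> odd d. real_of_int (mobius d) * 2 ^ (m div d))"
    using arg_cong[OF trace_one_count_formula[OF m], of real_of_int] by simp
  finally show ?thesis
    using diff by (simp add: n trace_one_count_def)
qed

end
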